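(* Let $X$ be a connected, locally connected topological space and let $f\colon X\to[0,1]$ be a continuous surjection. Then $f$ is a quotient map, i.e. a subset $G\subseteq[0,1]$ is open in $[0,1]$ if and only if $f^{-1}(G)$ is open in $X$.
   Context: $[0,1]$ carries its usual Euclidean topology. *)

theory Defs
  imports "HOL-Analysis.Analysis"
begin

end

theory Submission
  imports Defs
begin

text \<open>Let \<open>U\<close> have open preimage and \<open>y \<in> U\<close> be a value of \<open>f\<close>. The components of
  \<open>f\<^sup>-\<^sup>1(U)\<close> through the fibre over \<open>y\<close> are open by local connectedness, and their images
  are intervals inside \<open>U\<close> containing \<open>y\<close>. If one of them reaches below \<open>y\<close>, all values
  of \<open>f\<close> slightly below \<open>y\<close> lie in \<open>U\<close>; otherwise their union together with \<open>{f > y}\<close>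
  is open, so \<open>{f < y}\<close> is clopen and, by connectedness, empty. Applying this to \<open>-f\<close> as
  well shows that \<open>U\<close> is a neighbourhood of \<open>y\<close> in the image of \<open>f\<close>.\<close>

lemma connected_component_preimage_interval:
  fixes f :: "'a \<Rightarrow> real"
  assumes cont: "continuous_map X euclideanreal f"
    and x: "x \<in> connected_component_of_set (subtopology X {x \<in> topspace X. f x \<in> U}) x0"
    and "f x \<le> z" "z \<le> f x0"
  shows "z \<in> U"
proof -
  define K where "K = connected_component_of_set (subtopology X {x \<in> topspace X. f x \<in> U}) x0"
  have "connectedin (subtopology X {x \<in> topspace X. f x \<in> U}) K"
    unfolding K_def by (rule connectedin_connected_component_of)
  then have K: "connectedin X K" "K \<subseteq> {x \<in> topspace X. f x \<in> U}"
    by (auto simp: connectedin_subtopology)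
  have "x0 \<in> K"
    using x unfolding K_def
    by (metis connected_component_of_eq_empty connected_component_of_refl empty_iff mem_Collect_eq)
  have "connected (f ` K)"
    using connectedin_continuous_map_image[OF cont K(1)] by simp
  moreover have "f x \<in> f ` K" "f x0 \<in> f ` K"
    using x \<open>x0 \<in> K\<close> unfolding K_def by auto
  ultimately have "z \<in> f ` K"
    using assms(3,4) unfolding connected_iff_interval by blast
  then show ?thesis
    using K(2) by auto
qed

lemma locally_connected_preimage_values_below:
  fixes f :: "'a \<Rightarrow> real"
  assumes conn: "connected_space X" and lc: "locally_connected_space X"
    and cont: "continuous_map X euclideanreal f"
    and U: "openin X {x \<in> topspace X. f x \<in> U}"
    and "y \<in> U" and y: "y \<in> f ` topspace X"
  shows "\<exists>e>0. \<forall>x\<in>topspace X. y - e < f x \<and> f x \<le> y \<longrightarrow> f x \<in> U"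
proof -
  define C where "C = connected_component_of_set (subtopology X {x \<in> topspace X. f x \<in> U})"
  define V where "V = (\<Union>x0\<in>{x \<in> topspace X. f x = y}. C x0)"
  have fibre_V: "x \<in> V" if "x \<in> topspace X" "f x = y" for x
  proof -
    have "x \<in> C x"
      using that \<open>y \<in> U\<close> by (simp add: C_def connected_component_of_refl)
    then show ?thesis
      using that unfolding V_def by blast
  qed
  consider x where "x \<in> V" "f x < y" | "\<forall>x\<in>V. y \<le> f x"
    by (meson not_le)
  then show ?thesis
  proof cases
    case 1
    then obtain x0 where "f x0 = y" "x \<in> C x0"
      unfolding V_def by blast
    then have "f x' \<in> U" if "f x < f x'" "f x' \<le> y" for x'
      using connected_component_preimage_interval[OF cont, of x U x0 "f x'"] that
      unfolding C_def by simp
    then show ?thesis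
      using \<open>f x < y\<close> by (intro exI[of _ "y - f x"]) auto
  next
    case 2
    define A where "A = {x \<in> topspace X. f x \<in> {..<y}}"
    have "openin X (C x0)" if "x0 \<in> topspace X" "f x0 = y" for x0
      using locally_connected_B[OF lc] U that \<open>y \<in> U\<close> unfolding C_def by blast
    then have "openin X V"
      unfolding V_def by (auto intro: openin_Union)
    have "topspace X - A = V \<union> {x \<in> topspace X. f x \<in> {y<..}}"
    proof
      show "topspace X - A \<subseteq> V \<union> {x \<in> topspace X. f x \<in> {y<..}}"
        using fibre_V unfolding A_def by fastforce
      show "V \<union> {x \<in> topspace X. f x \<in> {y<..}} \<subseteq> topspace X - A"
        using openin_subset[OF \<open>openin X V\<close>] 2 unfolding A_def by fastforce
    qed
    then have "closedin X A"
      using \<open>openin X V\<close> openin_continuous_map_preimage[OF cont, of "{y<..}"]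
      unfolding closedin_def A_def by (auto intro: openin_Un)
    moreover have "openin X A"
      using openin_continuous_map_preimage[OF cont, of "{..<y}"] unfolding A_def by simp
    moreover have "A \<noteq> topspace X"
      using y unfolding A_def by auto
    ultimately have "A = {}"
      using conn unfolding connected_space_clopen_in by blast
    then have "f x = y" if "x \<in> topspace X" "f x \<le> y" for x
      using that unfolding A_def by (metis (mono_tags, lifting) empty_iff lessThan_iff mem_Collect_eq order_less_le)
    then show ?thesis
      using \<open>y \<in> U\<close> by (intro exI[of _ 1]) auto
  qed
qed

lemma locally_connected_preimage_values_near:
  fixes f :: "'a \<Rightarrow> real"
  assumes conn: "connected_space X" and lc: "locally_connected_space X"
    and cont: "continuous_map X euclideanreal f"
    and U: "openin X {x \<in> topspace X. f x \<in> U}"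
    and "y \<in> U" and y: "y \<in> f ` topspace X"
  shows "\<exists>e>0. \<forall>x\<in>topspace X. dist (f x) y < e \<longrightarrow> f x \<in> U"
proof -
  obtain e1 where "e1 > 0" and below: "\<forall>x\<in>topspace X. y - e1 < f x \<and> f x \<le> y \<longrightarrow> f x \<in> U"
    using locally_connected_preimage_values_below[OF assms] by blast
  have "continuous_map X euclideanreal (\<lambda>x. - f x)"
    using cont by (simp add: continuous_map_minus)
  moreover have "openin X {x \<in> topspace X. - f x \<in> uminus ` U}"
    using U by (simp add: image_iff)
  moreover have "- y \<in> uminus ` U" "- y \<in> (\<lambda>x. - f x) ` topspace X"
    using \<open>y \<in> U\<close> y by auto
  ultimately obtain e2 where "e2 > 0"
    and above: "\<forall>x\<in>topspace X. - y - e2 < - f x \<and> - f x \<le> - y \<longrightarrow> - f x \<in> uminus ` U"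
    using locally_connected_preimage_values_below[OF conn lc] by meson
  have "f x \<in> U" if "x \<in> topspace X" "dist (f x) y < min e1 e2" for x
  proof (cases "f x \<le> y")
    case True
    then show ?thesis using below that by (auto simp: dist_real_def)
  next
    case False
    then have "- f x \<in> uminus ` U" using above that by (auto simp: dist_real_def)
    then show ?thesis by force
  qed
  then show ?thesis
    using \<open>e1 > 0\<close> \<open>e2 > 0\<close> by (intro exI[of _ "min e1 e2"]) auto
qed

theorem quotient_map_locally_connected_real:
  fixes f :: "'a \<Rightarrow> real"
  assumes conn: "connected_space X" and lc: "locally_connected_space X"
    and cont: "continuous_map X euclideanreal f"
  shows "quotient_map X (top_of_set (f ` topspace X)) f"
  unfolding quotient_map_def
proof (intro conjI allI impI iffI)
  fix U
  assume "U \<subseteq> topspace (top_of_set (f ` topspace X))"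
    and "openin (top_of_set (f ` topspace X)) U"
  moreover have "continuous_map X (top_of_set (f ` topspace X)) f"
    using cont by (simp add: continuous_map_in_subtopology)
  ultimately show "openin X {x \<in> topspace X. f x \<in> U}"
    unfolding continuous_map_def by blast
next
  fix U
  assume "U \<subseteq> topspace (top_of_set (f ` topspace X))"
    and "openin X {x \<in> topspace X. f x \<in> U}"
  then show "openin (top_of_set (f ` topspace X)) U"
    unfolding openin_euclidean_subtopology_iff
    using locally_connected_preimage_values_near[OF conn lc cont] by (auto simp: dist_commute)
qed simp

theorem mainTheorem2:
  fixes X :: "'a topology" and f :: "'a \<Rightarrow> real"
  assumes "connected_space X"
    and "locally_connected_space X"
    and "continuous_map X (top_of_set {0..1}) f"
    and "f ` topspace X = {0..1}"
  shows "quotient_map X (top_of_set {0..1}) f"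
proof -
  have "continuous_map X euclideanreal f"
    using assms(3) by (simp add: continuous_map_in_subtopology)
  then have "quotient_map X (top_of_set (f ` topspace X)) f"
    by (rule quotient_map_locally_connected_real[OF assms(1,2)])
  then show ?thesis
    using assms(4) by simp
qed

end
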